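(* Let $q$ be a prime power, and let $d$ and $k$ be positive divisors of $q-1$ such that $d\nmid k$. Then there are at most $d$ elements $a\in\mathbb F_q^*$ for which the polynomial $x^{k+1}+ax$ maps all elements of $\mu_d$ into the same coset of $\mathbb F_q^*$ modulo $\mu_d$.
   Context: $\mathbb F_q$ is the field with $q$ elements, $\mathbb F_q^*$ its multiplicative group. For a divisor $d$ of $q-1$, $\mu_d$ denotes the group of $d$-th roots of unity in $\mathbb F_q^*$. *)

theory Defs
  imports Main
begin

definition mu :: "nat \<Rightarrow> 'a::field set" where
  "mu d = {x. x ^ d = 1}"

definition mu_coset :: "nat \<Rightarrow> 'a::field \<Rightarrow> 'a set" where
  "mu_coset d c = (\<lambda>u. c * u) ` mu d"

definition maps_mu_into_one_coset :: "nat \<Rightarrow> ('a::field \<Rightarrow> 'a) \<Rightarrow> bool" where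
  "maps_mu_into_one_coset d f = (\<exists>c. c \<noteq> 0 \<and> (\<forall>z \<in> mu d. f z \<in> mu_coset d c))"

end

theory Submission
  imports Defs "HOL-Algebra.Algebraic_Closure_Type"
begin

text \<open>
  Pick \<open>z \<in> \<mu>\<^sub>d\<close> with \<open>\<zeta> = z\<^sup>k \<noteq> 1\<close>; this is possible because \<open>\<mu>\<^sub>d\<close> is cyclic of order \<open>d\<close>
  and \<open>d \<nmid> k\<close>. If \<open>f(x) = x\<^sup>k\<^sup>+\<^sup>1 + a x\<close> maps \<open>\<mu>\<^sub>d\<close> into one coset, then the values
  \<open>f(1) = a + 1\<close> and \<open>f(z) = z (a + \<zeta>)\<close> have a quotient in \<open>\<mu>\<^sub>d\<close>, so \<open>(a + \<zeta>)/(a + 1) \<in> \<mu>\<^sub>d\<close>.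
  Since \<open>\<zeta> \<noteq> 1\<close>, the Moebius map \<open>a \<mapsto> (a + \<zeta>)/(a + 1)\<close> is injective, hence there are
  at most \<open>|\<mu>\<^sub>d| \<le> d\<close> such \<open>a\<close>.
\<close>

lemma card_mu_le:
  assumes "d > 0"
  shows "card (mu d :: 'a::field set) \<le> d"
proof -
  define p :: "'a poly" where "p = monom 1 d - 1"
  have "coeff p d = 1"
    using assms by (simp add: p_def)
  then have "p \<noteq> 0"
    by auto
  have "mu d = {x. poly p x = 0}"
    by (simp add: mu_def p_def poly_monom)
  also have "card \<dots> \<le> degree p"
    using \<open>p \<noteq> 0\<close> by (rule card_poly_roots_bound)
  also have "\<dots> \<le> d"
    using degree_diff_le_max[of "monom (1::'a) d" 1] by (simp add: p_def degree_monom_eq)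
  finally show ?thesis .
qed

lemma zero_notin_mu: "d > 0 \<Longrightarrow> 0 \<notin> mu d"
  by (simp add: mu_def power_0_left)

lemma mu_divide: "x \<in> mu d \<Longrightarrow> y \<in> mu d \<Longrightarrow> x / y \<in> mu d"
  by (simp add: mu_def power_divide)

lemma finite_field_has_element_of_order_card_minus_one:
  "\<exists>g::'a::{finite,field}. \<forall>n. g ^ n = 1 \<longleftrightarrow> (card (UNIV :: 'a set) - 1) dvd n"
proof -
  let ?R = "ring_of_type_algebra :: 'a ring"
  interpret F: field ?R
    by (rule field_from_type_algebra)
  \<comment> \<open>Qualified: \<open>Ring_Divisibility\<close> declares a second, distinct \<open>mult_of\<close>.\<close>
  interpret G: group "Multiplicative_Group.mult_of ?R"
    by (rule F.field_mult_group)
  have carrier: "carrier ?R = UNIV" and one: "\<one>\<^bsub>?R\<^esub> = 1"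
    by (simp_all add: ring_of_type_algebra_def)
  have pow: "x [^]\<^bsub>?R\<^esub> n = x ^ n" for x :: 'a and n :: nat
    by (induction n) (simp_all add: ring_of_type_algebra_def)
  obtain g where g: "g \<in> carrier (Multiplicative_Group.mult_of ?R)"
    and gen: "carrier (Multiplicative_Group.mult_of ?R) = {g [^]\<^bsub>?R\<^esub> i |i. i \<in> (UNIV :: nat set)}"
    using F.finite_field_mult_group_has_gen by (auto simp: carrier)
  have "generate (Multiplicative_Group.mult_of ?R) {g} = carrier (Multiplicative_Group.mult_of ?R)"
    using G.generate_pow_on_finite_carrier[OF _ g] gen by (simp add: Multiplicative_Group.nat_pow_mult_of carrier)
  then have "G.ord g = card (UNIV :: 'a set) - 1"
    using G.generate_pow_card[OF g] by (simp add: carrier card_Diff_singleton)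
  then have "g ^ n = 1 \<longleftrightarrow> (card (UNIV :: 'a set) - 1) dvd n" for n
    using G.pow_eq_id[OF g, of n] by (simp add: Multiplicative_Group.nat_pow_mult_of pow one)
  then show ?thesis
    by blast
qed

lemma finite_field_exists_mu_not_root:
  fixes d k :: nat
  assumes "d dvd card (UNIV :: 'a::{finite,field} set) - 1" and "\<not> d dvd k"
  shows "\<exists>z::'a. z \<in> mu d \<and> z ^ k \<noteq> 1"
proof -
  obtain g :: 'a where g: "\<And>n. g ^ n = 1 \<longleftrightarrow> (card (UNIV :: 'a set) - 1) dvd n"
    using finite_field_has_element_of_order_card_minus_one by blast
  obtain e where e: "card (UNIV :: 'a set) - 1 = d * e"
    using assms(1) by blast
  have "card {0::'a, 1} \<le> card (UNIV :: 'a set)"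
    by (rule card_mono) auto
  then have "e > 0"
    using e by (cases e) auto
  show ?thesis
  proof (intro exI conjI)
    have "(g ^ e) ^ d = g ^ (card (UNIV :: 'a set) - 1)"
      unfolding e by (simp add: mult.commute flip: power_mult)
    then show "g ^ e \<in> mu d"
      by (simp add: mu_def g)
    show "(g ^ e) ^ k \<noteq> 1"
    proof
      assume "(g ^ e) ^ k = 1"
      then have "(card (UNIV :: 'a set) - 1) dvd e * k"
        by (simp add: g flip: power_mult)
      then have "e * d dvd e * k"
        unfolding e by (simp add: mult.commute)
      then show False
        using assms(2) \<open>e > 0\<close> by simp
    qed
  qed
qed

lemma maps_mu_into_one_coset_quotient:
  assumes "d > 0" and "maps_mu_into_one_coset d f" and "x \<in> mu d" and "y \<in> mu d"
  shows "f x \<noteq> 0" and "f y / f x \<in> mu d"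
proof -
  obtain c where "c \<noteq> 0" and coset: "\<And>w. w \<in> mu d \<Longrightarrow> f w \<in> mu_coset d c"
    using assms(2) unfolding maps_mu_into_one_coset_def by blast
  obtain u v where u: "u \<in> mu d" "f x = c * u" and v: "v \<in> mu d" "f y = c * v"
    using coset[OF assms(3)] coset[OF assms(4)] unfolding mu_coset_def by blast
  have "u \<noteq> 0"
    using u(1) zero_notin_mu[OF assms(1)] by blast
  then show "f x \<noteq> 0"
    using \<open>c \<noteq> 0\<close> u(2) by simp
  have "f y / f x = v / u"
    using \<open>c \<noteq> 0\<close> u(2) v(2) by simp
  also have "\<dots> \<in> mu d"
    using v(1) u(1) by (rule mu_divide)
  finally show "f y / f x \<in> mu d" .
qed

lemma inj_on_moebius_shift:
  fixes \<zeta> :: "'a::field"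
  assumes "\<zeta> \<noteq> 1"
  shows "inj_on (\<lambda>a. (a + \<zeta>) / (a + 1)) {a. a + 1 \<noteq> 0}"
proof (rule inj_onI)
  fix a b :: 'a
  assume "a \<in> {a. a + 1 \<noteq> 0}" "b \<in> {a. a + 1 \<noteq> 0}" "(a + \<zeta>) / (a + 1) = (b + \<zeta>) / (b + 1)"
  then have "(a - b) * (1 - \<zeta>) = 0"
    by (simp add: frac_eq_eq algebra_simps)
  then show "a = b"
    using assms by simp
qed

lemma binomial_one_coset_moebius_in_mu:
  fixes a z :: "'a::field"
  assumes "d > 0" and "z \<in> mu d" and "maps_mu_into_one_coset d (\<lambda>x. x ^ (k + 1) + a * x)"
  shows "a + 1 \<noteq> 0" and "(a + z ^ k) / (a + 1) \<in> mu d"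
proof -
  have "1 \<in> (mu d :: 'a set)"
    by (simp add: mu_def)
  note quotient = maps_mu_into_one_coset_quotient[OF assms(1,3) this assms(2)]
  then show "a + 1 \<noteq> 0"
    by (simp add: add.commute)
  have "z \<noteq> 0"
    using assms(2) zero_notin_mu[OF assms(1)] by blast
  have "z ^ (k + 1) + a * z = z * (a + z ^ k)" and "1 ^ (k + 1) + a * 1 = a + 1"
    by (simp_all add: algebra_simps)
  then have "(a + z ^ k) / (a + 1) = ((z ^ (k + 1) + a * z) / (1 ^ (k + 1) + a * 1)) / z"
    using \<open>z \<noteq> 0\<close> by simp
  also have "\<dots> \<in> mu d"
    using quotient(2) assms(2) by (rule mu_divide)
  finally show "(a + z ^ k) / (a + 1) \<in> mu d" .
qed

theorem proposition4p6:
  fixes d k :: nat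
  assumes "d > 0" and "k > 0"
    and "d dvd (card (UNIV :: 'a set) - 1)" and "k dvd (card (UNIV :: 'a set) - 1)"
    and "\<not> d dvd k"
  shows "card {a :: 'a::{finite,field}. a \<noteq> 0 \<and> maps_mu_into_one_coset d (\<lambda>x. x ^ (k + 1) + a * x)} \<le> d"
proof -
  let ?S = "{a :: 'a. a \<noteq> 0 \<and> maps_mu_into_one_coset d (\<lambda>x. x ^ (k + 1) + a * x)}"
  obtain z :: 'a where z: "z \<in> mu d" and "z ^ k \<noteq> 1"
    using finite_field_exists_mu_not_root assms(3,5) by blast
  define \<phi> where "\<phi> = (\<lambda>a. (a + z ^ k) / (a + 1))"
  have "?S \<subseteq> {a. a + 1 \<noteq> 0}" and "\<phi> ` ?S \<subseteq> mu d"
    using binomial_one_coset_moebius_in_mu[OF assms(1) z] by (auto simp: \<phi>_def)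
  moreover have "inj_on \<phi> ?S"
    unfolding \<phi>_def using inj_on_moebius_shift[OF \<open>z ^ k \<noteq> 1\<close>] calculation(1) by (rule inj_on_subset)
  ultimately have "card ?S \<le> card (mu d :: 'a set)"
    by (intro card_inj_on_le) simp_all
  also have "\<dots> \<le> d"
    using assms(1) by (rule card_mu_le)
  finally show ?thesis .
qed

end
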